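(* A reaction network $(X,\mathscr{R})$ admits a Lewis realization if and only if it is conservative.
   Context: A reaction network (RN) $(X,\mathscr{R})$ consists of a finite non-empty set $X$ of species and a finite non-empty set $\mathscr{R}$ of reactions. Each reaction $r$ is given by stoichiometric coefficients $s^-_{xr},s^+_{xr}\in\mathbb{N}_0$. The stoichiometric matrix $S\in\mathbb{Z}^{X\times\mathscr{R}}$ has entries $S_{xr}=s^+_{xr}-s^-_{xr}$. The paper assumes throughout that RNs are closed: every reaction $r$ has $x,y$ with $S_{xr}<0<S_{yr}$. The RN is conservative if there is $m\in\mathbb{R}^X$ with all entries positive and $m^\top S=0$. An sf-instance is a matrix $A\in\mathbb{N}_0^{\mathcal{A}\times X}$ ($\mathcal{A}$ a non-empty finite set) with every column nonzero and $AS=0$. An sf-realization is an sf-instance with $\operatorname{im}A^\top=\ker S^\top$. Let $\mathcal{A}$ be a non-empty finite set and $\mathrm{val}:\mathcal{A}\to\mathbb{N}=\{1,2,\dots\}$ a function. Consider multigraphs (loops allowed) with vertex colouring $\alpha:V\to\mathcal{A}$. The degree $d(u)$ of a vertex is the number of non-loop edge incidences at $u$ plus twice the number of loops at $u$. A Lewis instance is an assignment of vertex-coloured multigraphs $\Gamma_x=(V_x,E_x,\alpha_x)$ to all $x\in X$ such that: - (i) $d(u)=\mathrm{val}(\alpha_x(u))$ for all $u\in V_x$ and $x\in X$; - (ii) the matrix $A$ with $A_{ax}=|\{u\in V_x:\alpha_x(u)=a\}|$ is an sf-instance. A Lewis realization is a Lewis instance whose matrix $A$ is an sf-realization (for some choice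 of $\mathcal{A}$ and $\mathrm{val}$). *)

theory Defs
  imports Complex_Main "HOL-Library.Multiset"
begin

text \<open>A reaction network on a finite nonempty species type 'x and a finite nonempty
reaction type 'r is given by stoichiometric coefficients sm (= s^-) and sp (= s^+).\<close>

definition stoich :: "('x \<Rightarrow> 'r \<Rightarrow> nat) \<Rightarrow> ('x \<Rightarrow> 'r \<Rightarrow> nat) \<Rightarrow> 'x \<Rightarrow> 'r \<Rightarrow> int" where
  "stoich sm sp x r = int (sp x r) - int (sm x r)"

definition closed_RN :: "('x \<Rightarrow> 'r \<Rightarrow> nat) \<Rightarrow> ('x \<Rightarrow> 'r \<Rightarrow> nat) \<Rightarrow> bool" where
  "closed_RN sm sp \<longleftrightarrow> (\<forall>r. \<exists>x y. stoich sm sp x r < 0 \<and> 0 < stoich sm sp y r)"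

definition conservative :: "('x::finite \<Rightarrow> 'r \<Rightarrow> nat) \<Rightarrow> ('x \<Rightarrow> 'r \<Rightarrow> nat) \<Rightarrow> bool" where
  "conservative sm sp \<longleftrightarrow>
     (\<exists>m :: 'x \<Rightarrow> real. (\<forall>x. 0 < m x) \<and>
        (\<forall>r. (\<Sum>x\<in>UNIV. m x * of_int (stoich sm sp x r)) = 0))"

definition sf_instance :: "nat set \<Rightarrow> (nat \<Rightarrow> 'x::finite \<Rightarrow> nat) \<Rightarrow> ('x \<Rightarrow> 'r \<Rightarrow> int) \<Rightarrow> bool" where
  "sf_instance Acol A S \<longleftrightarrow>
     finite Acol \<and> Acol \<noteq> {} \<and>
     (\<forall>x. \<exists>a\<in>Acol. A a x \<noteq> 0) \<and>
     (\<forall>a\<in>Acol. \<forall>r. (\<Sum>x\<in>UNIV. int (A a x) * S x r) = 0)"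

definition sf_realization :: "nat set \<Rightarrow> (nat \<Rightarrow> 'x::finite \<Rightarrow> nat) \<Rightarrow> ('x \<Rightarrow> 'r \<Rightarrow> int) \<Rightarrow> bool" where
  "sf_realization Acol A S \<longleftrightarrow>
     sf_instance Acol A S \<and>
     {v :: 'x \<Rightarrow> real. \<exists>l :: nat \<Rightarrow> real. \<forall>x. v x = (\<Sum>a\<in>Acol. l a * real (A a x))}
       = {v :: 'x \<Rightarrow> real. \<forall>r. (\<Sum>x\<in>UNIV. v x * of_int (S x r)) = 0}"

text \<open>Vertex-coloured multigraphs (loops allowed): a vertex set V, a multiset E of
edges given by their two endpoints, and a colouring alpha.\<close>

type_synonym cmgraph = "nat set \<times> (nat \<times> nat) multiset \<times> (nat \<Rightarrow> nat)"

definition mg_V :: "cmgraph \<Rightarrow> nat set" where "mg_V G = fst G"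
definition mg_E :: "cmgraph \<Rightarrow> (nat \<times> nat) multiset" where "mg_E G = fst (snd G)"
definition mg_col :: "cmgraph \<Rightarrow> nat \<Rightarrow> nat" where "mg_col G = snd (snd G)"

text \<open>Degree: non-loop incidences plus twice the loops (a loop (u,u) counts twice).\<close>

definition mg_degree :: "cmgraph \<Rightarrow> nat \<Rightarrow> nat" where
  "mg_degree G u = size {# e \<in># mg_E G. fst e = u #} + size {# e \<in># mg_E G. snd e = u #}"

definition wf_cmgraph :: "nat set \<Rightarrow> cmgraph \<Rightarrow> bool" where
  "wf_cmgraph Acol G \<longleftrightarrow> finite (mg_V G) \<and>
     (\<forall>e\<in>#mg_E G. fst e \<in> mg_V G \<and> snd e \<in> mg_V G) \<and>
     (\<forall>u\<in>mg_V G. mg_col G u \<in> Acol)"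

definition lewis_matrix :: "('x \<Rightarrow> cmgraph) \<Rightarrow> nat \<Rightarrow> 'x \<Rightarrow> nat" where
  "lewis_matrix \<Gamma> a x = card {u \<in> mg_V (\<Gamma> x). mg_col (\<Gamma> x) u = a}"

definition lewis_instance ::
  "('x::finite \<Rightarrow> 'r \<Rightarrow> nat) \<Rightarrow> ('x \<Rightarrow> 'r \<Rightarrow> nat) \<Rightarrow> nat set \<Rightarrow> (nat \<Rightarrow> nat) \<Rightarrow> ('x \<Rightarrow> cmgraph) \<Rightarrow> bool" where
  "lewis_instance sm sp Acol val \<Gamma> \<longleftrightarrow>
     (\<forall>a\<in>Acol. 1 \<le> val a) \<and>
     (\<forall>x. wf_cmgraph Acol (\<Gamma> x)) \<and>
     (\<forall>x. \<forall>u\<in>mg_V (\<Gamma> x). mg_degree (\<Gamma> x) u = val (mg_col (\<Gamma> x) u)) \<and>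
     sf_instance Acol (lewis_matrix \<Gamma>) (stoich sm sp)"

definition lewis_realization ::
  "('x::finite \<Rightarrow> 'r \<Rightarrow> nat) \<Rightarrow> ('x \<Rightarrow> 'r \<Rightarrow> nat) \<Rightarrow> nat set \<Rightarrow> (nat \<Rightarrow> nat) \<Rightarrow> ('x \<Rightarrow> cmgraph) \<Rightarrow> bool" where
  "lewis_realization sm sp Acol val \<Gamma> \<longleftrightarrow>
     lewis_instance sm sp Acol val \<Gamma> \<and>
     sf_realization Acol (lewis_matrix \<Gamma>) (stoich sm sp)"

end

theory Submission
  imports Defs "HOL-Library.Nat_Bijection"
begin

text \<open>
  The column sums of an sf-instance form a strictly positive conservation law.
  Conversely, the real left kernel of the integer matrix S is spanned by finitely many integer
  vectors. Writing a positive conservation law m in terms of them and rounding the coefficients of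
  N m for large N gives an integer kernel vector p with all entries positive; adding a large
  multiple of p to every spanning vector makes all of them nonnegative without changing the span,
  and together with p they are the rows of an sf-realization. Finally every nonnegative integer
  matrix is the Lewis matrix of graphs whose atoms are isolated vertices carrying one loop each,
  all of valence 2.
\<close>

definition left_kernel :: "'r set \<Rightarrow> ('x::finite \<Rightarrow> 'r \<Rightarrow> int) \<Rightarrow> ('x \<Rightarrow> real) set" where
  "left_kernel R S = {v. \<forall>r\<in>R. (\<Sum>x\<in>UNIV. v x * of_int (S x r)) = 0}"

definition row_span :: "'i set \<Rightarrow> ('i \<Rightarrow> 'x \<Rightarrow> real) \<Rightarrow> ('x \<Rightarrow> real) set" where
  "row_span I g = {v. \<exists>l. \<forall>x. v x = (\<Sum>i\<in>I. l i * g i x)}"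

lemma row_spanI:
  "(\<And>x. v x = (\<Sum>i\<in>I. l i * g i x)) \<Longrightarrow> v \<in> row_span I g"
  unfolding row_span_def by blast

lemma row_spanE:
  assumes "v \<in> row_span I g"
  obtains l where "\<And>x. v x = (\<Sum>i\<in>I. l i * g i x)"
  using assms unfolding row_span_def by blast

lemma row_span_cong:
  "(\<And>i x. i \<in> I \<Longrightarrow> g i x = g' i x) \<Longrightarrow> row_span I g = row_span I g'"
  unfolding row_span_def by (metis (no_types, lifting) sum.cong)

lemma sf_realization_iff:
  "sf_realization Acol A S \<longleftrightarrow>
     sf_instance Acol A S \<and> row_span Acol (\<lambda>a x. real (A a x)) = left_kernel UNIV S"
  unfolding sf_realization_def row_span_def left_kernel_def by simp

lemma conservative_iff_positive_left_kernel_vector: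
  "conservative sm sp \<longleftrightarrow> (\<exists>m. (\<forall>x. 0 < m x) \<and> m \<in> left_kernel UNIV (stoich sm sp))"
  unfolding conservative_def left_kernel_def by simp

lemma of_int_in_left_kernel_iff:
  "(\<lambda>x. real_of_int (w x)) \<in> left_kernel R S \<longleftrightarrow> (\<forall>r\<in>R. (\<Sum>x\<in>UNIV. w x * S x r) = 0)"
proof -
  have "(\<Sum>x\<in>UNIV. real_of_int (w x) * of_int (S x r)) = of_int (\<Sum>x\<in>UNIV. w x * S x r)" for r
    by simp
  then show ?thesis
    unfolding left_kernel_def by (simp only: mem_Collect_eq of_int_eq_0_iff)
qed

lemma sum_linear_combination_swap:
  fixes c :: "'i \<Rightarrow> 'a::comm_semiring_0"
  shows "(\<Sum>x\<in>X. (\<Sum>i\<in>I. c i * g i x) * s x) = (\<Sum>i\<in>I. c i * (\<Sum>x\<in>X. g i x * s x))"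
  by (simp add: sum_distrib_left sum_distrib_right mult.assoc sum.swap[of _ X])

lemma row_span_subset_left_kernel:
  assumes "\<forall>i\<in>I. g i \<in> left_kernel R S"
  shows "row_span I g \<subseteq> left_kernel R S"
proof
  fix v
  assume "v \<in> row_span I g"
  then obtain l where v: "\<And>x. v x = (\<Sum>i\<in>I. l i * g i x)"
    by (auto elim: row_spanE)
  have "(\<Sum>x\<in>UNIV. v x * of_int (S x r)) = 0" if "r \<in> R" for r
  proof -
    have "(\<Sum>x\<in>UNIV. v x * of_int (S x r)) = (\<Sum>i\<in>I. l i * (\<Sum>x\<in>UNIV. g i x * of_int (S x r)))"
      by (simp add: v sum_linear_combination_swap)
    also have "\<dots> = 0"
      using assms that by (simp add: left_kernel_def)
    finally show ?thesis .
  qed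
  then show "v \<in> left_kernel R S"
    by (simp add: left_kernel_def)
qed

lemma row_span_member:
  assumes "finite I" and "i \<in> I"
  shows "g i \<in> row_span I g"
  by (rule row_spanI[where l = "\<lambda>k. of_bool (k = i)"]) (use assms in simp)

lemma row_span_lin_comb2:
  assumes "u \<in> row_span I g" and "w \<in> row_span I g"
  shows "(\<lambda>x. a * u x + b * w x) \<in> row_span I g"
proof -
  obtain lu lw where "\<And>x. u x = (\<Sum>i\<in>I. lu i * g i x)" and "\<And>x. w x = (\<Sum>i\<in>I. lw i * g i x)"
    using assms by (metis row_spanE)
  then show ?thesis
    by (intro row_spanI[where l = "\<lambda>i. a * lu i + b * lw i"])
      (simp add: distrib_right sum.distrib mult.assoc sum_distrib_left)
qed

lemma row_span_subset:
  assumes "\<forall>j\<in>J. g j \<in> row_span I f"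
  shows "row_span J g \<subseteq> row_span I f"
proof
  fix v
  assume "v \<in> row_span J g"
  then obtain l where v: "\<And>x. v x = (\<Sum>j\<in>J. l j * g j x)"
    by (auto elim: row_spanE)
  have "\<forall>j\<in>J. \<exists>cj. \<forall>x. g j x = (\<Sum>i\<in>I. cj i * f i x)"
    using assms by (simp add: row_span_def)
  then obtain c where c: "\<forall>j\<in>J. \<forall>x. g j x = (\<Sum>i\<in>I. c j i * f i x)"
    by (rule bchoice[elim_format]) blast
  show "v \<in> row_span I f"
  proof (rule row_spanI)
    fix x
    have "v x = (\<Sum>j\<in>J. l j * (\<Sum>i\<in>I. c j i * f i x))"
      using v c by (auto intro: sum.cong)
    then show "v x = (\<Sum>i\<in>I. (\<Sum>j\<in>J. l j * c j i) * f i x)"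
      by (simp add: sum_distrib_left sum_distrib_right mult.assoc sum.swap[of _ J])
  qed
qed

lemma left_kernel_empty_integer_span:
  "\<exists>n (f :: nat \<Rightarrow> 'x::finite \<Rightarrow> int). left_kernel {} S = row_span {..<n} (\<lambda>i x. of_int (f i x))"
proof -
  obtain h :: "nat \<Rightarrow> 'x" where h: "bij_betw h {..<card (UNIV :: 'x set)} UNIV"
    using ex_bij_betw_nat_finite[of "UNIV :: 'x set"] by (auto simp: atLeast0LessThan)
  define f :: "nat \<Rightarrow> 'x \<Rightarrow> int" where "f i x = of_bool (x = h i)" for i x
  have "v \<in> row_span {..<card (UNIV :: 'x set)} (\<lambda>i x. of_int (f i x))" for v :: "'x \<Rightarrow> real"
  proof (rule row_spanI[where l = "v \<circ> h"])
    fix x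
    show "v x = (\<Sum>i<card (UNIV :: 'x set). (v \<circ> h) i * of_int (f i x))"
      using sum.reindex_bij_betw[OF h, of "\<lambda>y. v y * of_bool (x = y)"] by (simp add: f_def)
  qed
  then show ?thesis
    by (auto simp: left_kernel_def)
qed

text \<open>One Gaussian elimination step: the pivot F j is used to cancel the value of the new
  equation on every F i.\<close>

lemma row_span_Int_left_kernel_singleton:
  fixes F :: "nat \<Rightarrow> 'x::finite \<Rightarrow> real" and S :: "'x \<Rightarrow> 'r \<Rightarrow> int" and r :: 'r
  defines "c i \<equiv> (\<Sum>x\<in>UNIV. F i x * of_int (S x r))"
  assumes j: "j < n" and pivot: "c j \<noteq> 0"
  shows "row_span {..<n} F \<inter> left_kernel {r} S = row_span {..<n} (\<lambda>i x. c j * F i x - c i * F j x)"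
    (is "_ = row_span _ ?G")
proof
  have "row_span {..<n} ?G \<subseteq> row_span {..<n} F"
  proof (intro row_span_subset ballI)
    fix i
    assume "i \<in> {..<n}"
    have "?G i = (\<lambda>x. c j * F i x + - c i * F j x)"
      by simp
    also have "\<dots> \<in> row_span {..<n} F"
      using j \<open>i \<in> {..<n}\<close> by (intro row_span_lin_comb2 row_span_member) auto
    finally show "?G i \<in> row_span {..<n} F" .
  qed
  moreover have "?G i \<in> left_kernel {r} S" for i
    by (simp add: left_kernel_def c_def left_diff_distrib sum_subtractf mult.assoc flip: sum_distrib_left)
  then have "row_span {..<n} ?G \<subseteq> left_kernel {r} S"
    by (intro row_span_subset_left_kernel) blast
  ultimately show "row_span {..<n} ?G \<subseteq> row_span {..<n} F \<inter> left_kernel {r} S"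
    by blast
next
  show "row_span {..<n} F \<inter> left_kernel {r} S \<subseteq> row_span {..<n} ?G"
  proof
    fix v
    assume v: "v \<in> row_span {..<n} F \<inter> left_kernel {r} S"
    then obtain l where l: "\<And>x. v x = (\<Sum>i<n. l i * F i x)"
      by (auto elim: row_spanE)
    have l_val: "(\<Sum>i<n. l i * c i) = 0"
      using v by (simp add: left_kernel_def l sum_linear_combination_swap c_def)
    show "v \<in> row_span {..<n} ?G"
    proof (rule row_spanI[where l = "\<lambda>i. l i / c j"])
      fix x
      have "(\<Sum>i<n. l i / c j * ?G i x) = (\<Sum>i<n. l i * F i x - l i * c i * (F j x / c j))"
        using pivot by (intro sum.cong) (simp_all add: field_simps)
      also have "\<dots> = v x - (\<Sum>i<n. l i * c i) * (F j x / c j)"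
        by (simp add: l sum_subtractf sum_distrib_right sum_divide_distrib)
      also have "\<dots> = v x"
        by (simp add: l_val)
      finally show "v x = (\<Sum>i<n. l i / c j * ?G i x)" ..
    qed
  qed
qed

lemma integer_row_span_Int_left_kernel:
  fixes f :: "nat \<Rightarrow> 'x::finite \<Rightarrow> int"
  shows "\<exists>m (g :: nat \<Rightarrow> 'x \<Rightarrow> int).
    row_span {..<n} (\<lambda>i x. of_int (f i x)) \<inter> left_kernel {r} S = row_span {..<m} (\<lambda>i x. of_int (g i x))"
proof -
  define c where "c i = (\<Sum>x\<in>UNIV. f i x * S x r)" for i
  have c_eq: "(\<Sum>x\<in>UNIV. real_of_int (f i x) * of_int (S x r)) = of_int (c i)" for i
    by (simp add: c_def)
  show ?thesis
  proof (cases "\<forall>i<n. c i = 0")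
    case True
    then have "row_span {..<n} (\<lambda>i x. of_int (f i x)) \<subseteq> left_kernel {r} S"
      by (intro row_span_subset_left_kernel) (simp add: left_kernel_def c_eq)
    then show ?thesis
      by (intro exI[of _ n] exI[of _ f]) (rule Int_absorb2)
  next
    case False
    then obtain j where "j < n" and "c j \<noteq> 0"
      by auto
    then have "row_span {..<n} (\<lambda>i x. of_int (f i x)) \<inter> left_kernel {r} S
        = row_span {..<n} (\<lambda>i x. of_int (c j * f i x - c i * f j x))"
      using row_span_Int_left_kernel_singleton[where F = "\<lambda>i x. of_int (f i x)" and S = S and r = r and j = j and n = n]
      by (simp add: c_eq)
    then show ?thesis
      by (intro exI[of _ n] exI[of _ "\<lambda>i x. c j * f i x - c i * f j x"])
  qed
qed

lemma left_kernel_integer_row_span: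
  fixes S :: "'x::finite \<Rightarrow> 'r \<Rightarrow> int"
  assumes "finite R"
  shows "\<exists>n (f :: nat \<Rightarrow> 'x \<Rightarrow> int). left_kernel R S = row_span {..<n} (\<lambda>i x. of_int (f i x))"
  using assms
proof (induction R rule: finite_induct)
  case empty
  show ?case
    by (rule left_kernel_empty_integer_span)
next
  case (insert r R)
  then obtain n and f :: "nat \<Rightarrow> 'x \<Rightarrow> int"
    where "left_kernel R S = row_span {..<n} (\<lambda>i x. of_int (f i x))"
    by blast
  moreover have "left_kernel (insert r R) S = left_kernel R S \<inter> left_kernel {r} S"
    by (auto simp: left_kernel_def)
  ultimately show ?case
    using integer_row_span_Int_left_kernel[of n f r S] by simp
qed

lemma sum_frac_mult_le_sum_abs:
  fixes t a :: "'i \<Rightarrow> real"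
  shows "(\<Sum>i\<in>I. frac (t i) * a i) \<le> (\<Sum>i\<in>I. \<bar>a i\<bar>)"
proof (rule sum_mono)
  fix i
  have "frac (t i) * a i \<le> frac (t i) * \<bar>a i\<bar>"
    by (simp add: mult_left_mono)
  also have "\<dots> \<le> \<bar>a i\<bar>"
    using frac_lt_1[of "t i"] by (simp add: mult_left_le_one_le)
  finally show "frac (t i) * a i \<le> \<bar>a i\<bar>" .
qed

lemma ex_less_of_nat_mult_finite:
  fixes m C :: "'x::finite \<Rightarrow> real"
  assumes "\<forall>x. 0 < m x"
  shows "\<exists>N::nat. \<forall>x. C x < of_nat N * m x"
proof -
  have "eventually (\<lambda>N. C x < real N * m x) sequentially" for x
  proof -
    obtain N0 :: nat where "C x < real N0 * m x"
      using ex_less_of_nat_mult assms by blast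
    moreover have "real N0 * m x \<le> real N * m x" if "N0 \<le> N" for N
      using that assms by (intro mult_right_mono) (auto simp: less_imp_le)
    ultimately show ?thesis
      unfolding eventually_sequentially by (meson less_le_trans)
  qed
  then have "eventually (\<lambda>N. \<forall>x. C x < real N * m x) sequentially"
    by (rule eventually_all_finite)
  then show ?thesis
    unfolding eventually_sequentially by blast
qed

text \<open>Rounding the coefficients of a large multiple of m keeps every entry positive.\<close>

lemma positive_integer_vector_in_row_span:
  fixes f :: "nat \<Rightarrow> 'x::finite \<Rightarrow> int"
  assumes m: "m \<in> row_span {..<n} (\<lambda>i x. of_int (f i x))" and pos: "\<forall>x. 0 < m x"
  obtains p :: "'x \<Rightarrow> int"
  where "\<And>x. 1 \<le> p x" and "(\<lambda>x. of_int (p x)) \<in> row_span {..<n} (\<lambda>i x. of_int (f i x))"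
proof -
  obtain lam where lam: "\<And>x. m x = (\<Sum>i<n. lam i * of_int (f i x))"
    using m by (auto elim: row_spanE)
  obtain N :: nat where N: "\<forall>x. (\<Sum>i<n. \<bar>of_int (f i x)\<bar>) < real N * m x"
    using ex_less_of_nat_mult_finite[OF pos, where C = "\<lambda>x. \<Sum>i<n. \<bar>of_int (f i x)\<bar>"] by blast
  define p where "p x = (\<Sum>i<n. \<lfloor>real N * lam i\<rfloor> * f i x)" for x
  have "0 < real_of_int (p x)" for x
  proof -
    have "real_of_int (p x) = real N * m x - (\<Sum>i<n. frac (real N * lam i) * of_int (f i x))"
      by (simp add: p_def lam frac_def sum_distrib_left algebra_simps sum_subtractf)
    then show ?thesis
      using N[rule_format, of x] sum_frac_mult_le_sum_abs[of "\<lambda>i. real N * lam i" "\<lambda>i. of_int (f i x)" "{..<n}"]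
      by linarith
  qed
  then have "1 \<le> p x" for x
    by (simp add: int_one_le_iff_zero_less)
  moreover have "(\<lambda>x. of_int (p x)) \<in> row_span {..<n} (\<lambda>i x. of_int (f i x))"
    by (rule row_spanI[where l = "\<lambda>i. of_int \<lfloor>real N * lam i\<rfloor>"]) (simp add: p_def)
  ultimately show ?thesis
    using that by blast
qed

lemma row_span_shifted_rows:
  fixes f :: "nat \<Rightarrow> 'x \<Rightarrow> real"
  assumes p: "p \<in> row_span {..<n} f"
  shows "row_span {..n} (\<lambda>a x. if a = 0 then p x else K * p x + f (a - 1) x) = row_span {..<n} f"
    (is "row_span _ ?g = _")
proof
  show "row_span {..n} ?g \<subseteq> row_span {..<n} f"
  proof (intro row_span_subset ballI)
    fix a
    assume a: "a \<in> {..n}"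
    show "?g a \<in> row_span {..<n} f"
    proof (cases "a = 0")
      case False
      then have "?g a = (\<lambda>x. K * p x + 1 * f (a - 1) x)"
        by simp
      also have "\<dots> \<in> row_span {..<n} f"
        using False a p by (intro row_span_lin_comb2 row_span_member) auto
      finally show ?thesis .
    qed (use p in simp)
  qed
  show "row_span {..<n} f \<subseteq> row_span {..n} ?g"
  proof (intro row_span_subset ballI)
    fix i
    assume "i \<in> {..<n}"
    have "f i = (\<lambda>x. 1 * ?g (Suc i) x + - K * ?g 0 x)"
      by simp
    also have "\<dots> \<in> row_span {..n} ?g"
      using \<open>i \<in> {..<n}\<close> by (intro row_span_lin_comb2 row_span_member) auto
    finally show "f i \<in> row_span {..n} ?g" .
  qed
qed

lemma nonneg_rows_imp_sf_realization:
  fixes R :: "nat \<Rightarrow> 'x::finite \<Rightarrow> int"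
  assumes nonneg: "\<And>a x. a \<le> n \<Longrightarrow> 0 \<le> R a x" and first_pos: "\<And>x. 0 < R 0 x"
    and span: "row_span {..n} (\<lambda>a x. of_int (R a x)) = left_kernel UNIV S"
  shows "sf_realization {..n} (\<lambda>a x. nat (R a x)) S"
proof -
  have "(\<lambda>x. real_of_int (R a x)) \<in> left_kernel UNIV S" if "a \<le> n" for a
    using row_span_member[of "{..n}" a "\<lambda>a x. of_int (R a x)"] that span by simp
  then have "(\<Sum>x\<in>UNIV. int (nat (R a x)) * S x r) = 0" if "a \<le> n" for a r
    using that nonneg by (simp add: of_int_in_left_kernel_iff)
  moreover have "\<exists>a\<in>{..n}. nat (R a x) \<noteq> 0" for x
    using first_pos[of x] by (intro bexI[of _ 0]) auto
  ultimately have "sf_instance {..n} (\<lambda>a x. nat (R a x)) S"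
    unfolding sf_instance_def by auto
  moreover have "row_span {..n} (\<lambda>a x. real (nat (R a x))) = row_span {..n} (\<lambda>a x. of_int (R a x))"
    using nonneg by (intro row_span_cong) simp
  ultimately show ?thesis
    using span by (simp add: sf_realization_iff)
qed

text \<open>The rows are p and B p + f i: the shift by B p makes them nonnegative without changing
  their span, and p makes every column nonzero.\<close>

lemma positive_left_kernel_vector_imp_sf_realization:
  fixes S :: "'x::finite \<Rightarrow> 'r::finite \<Rightarrow> int"
  assumes pos: "\<forall>x. 0 < m x" and ker: "m \<in> left_kernel UNIV S"
  shows "\<exists>Acol A. sf_realization Acol A S"
proof -
  obtain n and f :: "nat \<Rightarrow> 'x \<Rightarrow> int"
    where span: "left_kernel UNIV S = row_span {..<n} (\<lambda>i x. of_int (f i x))"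
    using left_kernel_integer_row_span[OF finite_UNIV, where S = S] by blast
  obtain p where p_pos: "\<And>x. 1 \<le> p x"
    and p_span: "(\<lambda>x. of_int (p x)) \<in> row_span {..<n} (\<lambda>i x. of_int (f i x))"
    using positive_integer_vector_in_row_span[where m = m and n = n and f = f] pos ker span by auto
  define B where "B = (\<Sum>i<n. \<Sum>x\<in>UNIV. \<bar>f i x\<bar>)"
  have B_nonneg: "0 \<le> B"
    unfolding B_def by (intro sum_nonneg) auto
  define R where "R a x = (if a = 0 then p x else B * p x + f (a - 1) x)" for a x
  have "0 \<le> R a x" if "a \<le> n" for a x
  proof (cases "a = 0")
    case False
    have "\<bar>f (a - 1) x\<bar> \<le> (\<Sum>y\<in>UNIV. \<bar>f (a - 1) y\<bar>)"
      by (rule member_le_sum) auto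
    also have "\<dots> \<le> B"
      unfolding B_def using False that by (intro member_le_sum) (auto intro: sum_nonneg)
    also have "B \<le> B * p x"
      using p_pos[of x] B_nonneg by (simp add: mult_le_cancel_left1)
    finally show ?thesis
      using False by (simp add: R_def abs_le_iff)
  qed (use p_pos[of x] in \<open>simp add: R_def\<close>)
  moreover have "0 < R 0 x" for x
    using p_pos[of x] by (simp add: R_def)
  moreover have "row_span {..n} (\<lambda>a x. of_int (R a x)) = left_kernel UNIV S"
    using row_span_shifted_rows[OF p_span, of "of_int B"]
    unfolding span R_def by (simp add: if_distrib cong: if_cong)
  ultimately show ?thesis
    using nonneg_rows_imp_sf_realization by blast
qed

lemma sf_instance_imp_positive_left_kernel_vector:
  fixes S :: "'x::finite \<Rightarrow> 'r \<Rightarrow> int"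
  assumes "sf_instance Acol A S"
  shows "\<exists>m. (\<forall>x. 0 < m x) \<and> m \<in> left_kernel UNIV S"
proof -
  have fin: "finite Acol" and col: "\<forall>x. \<exists>a\<in>Acol. A a x \<noteq> 0"
    using assms by (auto simp: sf_instance_def)
  have rows: "\<forall>a\<in>Acol. (\<lambda>x. real (A a x)) \<in> left_kernel UNIV S"
    using assms of_int_in_left_kernel_iff[of "\<lambda>x. int (A _ x)" UNIV S]
    by (simp add: sf_instance_def)
  define m where "m x = (\<Sum>a\<in>Acol. real (A a x))" for x
  have "m \<in> left_kernel UNIV S"
    using row_span_subset_left_kernel[OF rows] row_spanI[where v = m and I = Acol and l = "\<lambda>_. 1"] by (auto simp: m_def)
  moreover have "0 < m x" for x
  proof -
    obtain a where "a \<in> Acol" and "A a x \<noteq> 0"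
      using col by blast
    then show ?thesis
      using fin unfolding m_def by (intro sum_pos2) auto
  qed
  ultimately show ?thesis
    by blast
qed

text \<open>A vertex of colour a in the graph of x is encoded as prod_encode (a, k) with k < A a x;
  every vertex carries exactly one loop and nothing else, so it has degree 2.\<close>

definition loop_vertices :: "nat set \<Rightarrow> (nat \<Rightarrow> 'x \<Rightarrow> nat) \<Rightarrow> 'x \<Rightarrow> nat set" where
  "loop_vertices Acol A x = prod_encode ` (SIGMA a:Acol. {..<A a x})"

definition loop_graphs :: "nat set \<Rightarrow> (nat \<Rightarrow> 'x \<Rightarrow> nat) \<Rightarrow> 'x \<Rightarrow> cmgraph" where
  "loop_graphs Acol A x =
     (loop_vertices Acol A x, image_mset (\<lambda>u. (u, u)) (mset_set (loop_vertices Acol A x)),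
      \<lambda>u. fst (prod_decode u))"

lemma finite_loop_vertices: "finite Acol \<Longrightarrow> finite (loop_vertices Acol A x)"
  by (simp add: loop_vertices_def)

lemma wf_cmgraph_loop_graphs: "finite Acol \<Longrightarrow> wf_cmgraph Acol (loop_graphs Acol A x)"
  by (auto simp: wf_cmgraph_def loop_graphs_def mg_V_def mg_E_def mg_col_def finite_loop_vertices)
    (auto simp: loop_vertices_def)

lemma mg_degree_loop_graphs:
  assumes "finite Acol" and "u \<in> mg_V (loop_graphs Acol A x)"
  shows "mg_degree (loop_graphs Acol A x) u = 2"
proof -
  have "{w \<in> loop_vertices Acol A x. w = u} = {u}"
    using assms(2) by (auto simp: loop_graphs_def mg_V_def)
  then have "{#e \<in># mg_E (loop_graphs Acol A x). fst e = u#} = {#(u, u)#}"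
    and "{#e \<in># mg_E (loop_graphs Acol A x). snd e = u#} = {#(u, u)#}"
    using assms(1) by (simp_all add: loop_graphs_def mg_E_def filter_mset_image_mset finite_loop_vertices)
  then show ?thesis
    by (simp add: mg_degree_def)
qed

lemma lewis_matrix_loop_graphs:
  assumes "a \<in> Acol"
  shows "lewis_matrix (loop_graphs Acol A) a x = A a x"
proof -
  have "{u \<in> mg_V (loop_graphs Acol A x). mg_col (loop_graphs Acol A x) u = a}
      = prod_encode ` ({a} \<times> {..<A a x})"
    using assms by (auto simp: loop_graphs_def loop_vertices_def mg_V_def mg_col_def)
  moreover have "card (prod_encode ` ({a} \<times> {..<A a x})) = A a x"
    by (simp add: card_image inj_on_def)
  ultimately show ?thesis
    by (simp add: lewis_matrix_def)
qed

lemma sf_realization_cong: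
  assumes "\<forall>a\<in>Acol. \<forall>x. A a x = A' a x"
  shows "sf_realization Acol A S \<longleftrightarrow> sf_realization Acol A' S"
proof -
  have "row_span Acol (\<lambda>a x. real (A a x)) = row_span Acol (\<lambda>a x. real (A' a x))"
    using assms by (intro row_span_cong) simp
  with assms show ?thesis
    by (simp add: sf_realization_iff sf_instance_def)
qed

lemma sf_realization_imp_lewis_realization:
  assumes "sf_realization Acol A (stoich sm sp)"
  shows "lewis_realization sm sp Acol (\<lambda>_. 2) (loop_graphs Acol A)"
proof -
  have fin: "finite Acol"
    using assms by (simp add: sf_realization_def sf_instance_def)
  have "\<forall>a\<in>Acol. \<forall>x. lewis_matrix (loop_graphs Acol A) a x = A a x"
    by (simp add: lewis_matrix_loop_graphs)
  then have "sf_realization Acol (lewis_matrix (loop_graphs Acol A)) (stoich sm sp)"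
    using assms sf_realization_cong by blast
  then show ?thesis
    using fin by (auto simp: lewis_realization_def lewis_instance_def sf_realization_def
        wf_cmgraph_loop_graphs mg_degree_loop_graphs)
qed

theorem proposition13:
  fixes sm sp :: "'x::finite \<Rightarrow> 'r::finite \<Rightarrow> nat"
  assumes "closed_RN sm sp"
  shows "(\<exists>Acol val \<Gamma>. lewis_realization sm sp Acol val \<Gamma>) \<longleftrightarrow> conservative sm sp"
proof
  assume "\<exists>Acol val \<Gamma>. lewis_realization sm sp Acol val \<Gamma>"
  then obtain Acol \<Gamma> where "sf_instance Acol (lewis_matrix \<Gamma>) (stoich sm sp)"
    by (auto simp: lewis_realization_def lewis_instance_def)
  then show "conservative sm sp"
    unfolding conservative_iff_positive_left_kernel_vector
    by (rule sf_instance_imp_positive_left_kernel_vector)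
next
  assume "conservative sm sp"
  then obtain Acol A where "sf_realization Acol A (stoich sm sp)"
    unfolding conservative_iff_positive_left_kernel_vector
    using positive_left_kernel_vector_imp_sf_realization by blast
  then show "\<exists>Acol val \<Gamma>. lewis_realization sm sp Acol val \<Gamma>"
    using sf_realization_imp_lewis_realization by blast
qed

end
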